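(* Let $q$ be a prime power, $N$ a subgroup of $S_3$, and $\mathcal{L}\subseteq\mathbb{F}_q^3$ a subset invariant under the action of $N$, i.e. $\mathcal{L}^N=\mathcal{L}$. Suppose that each orbit of the action of $N\times K$ on $\mathcal{A}_q$ contains an element $u$ which can be written as $u=\lambda h+\mu e_j$ for some $h\in\mathcal{L}$, $\lambda,\mu\in\mathbb{F}_q$ and $j\in\{1,2,3\}$. Then $\mathcal{L}\cup\{(1,1,1)\}$ is a short covering of $\mathbb{F}_q^3$.
   Context: $\mathbb{F}_q$ is the finite field with $q$ elements; $e_1,e_2,e_3$ are the standard basis vectors of $\mathbb{F}_q^3$. Hamming distance $d(u,v)=|\{i:u_i\ne v_i\}|$; $B(u)=\{v:d(u,v)\le1\}$; $E(u)=\bigcup_{\lambda\in\mathbb{F}_q}B(\lambda u)$. A set $\mathcal{H}\subseteq\mathbb{F}_q^3$ is a short covering of $\mathbb{F}_q^3$ if $\bigcup_{h\in\mathcal{H}}E(h)=\mathbb{F}_q^3$. $S_3$ acts on $\mathbb{F}_q^3$ by permuting coordinates; $K=\{(u_1,u_2,u_3)\mapsto(\lambda u_1,\lambda u_2,\lambda u_3):\lambda\in\mathbb{F}_q^*\}$; these actions commute, giving an action of $N\times K$ on $\mathbb{F}_q^3$. $\mathcal{A}_q=\{(u_1,u_2,u_3)\in\mathbb{F}_q^3: u_1,u_2,u_3 \text{ pairwise distinct}\}$, which is invariant under $S_3\times K$. *)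

theory Defs
  imports "HOL-Analysis.Analysis" "HOL-Combinatorics.Permutations"
begin

text \<open>Vectors of F_q^3 are elements of type 'a^3 where 'a is a finite field.\<close>

definition hdist :: "'a^'n \<Rightarrow> 'a^'n \<Rightarrow> nat" where
  "hdist u v = card {i. u $ i \<noteq> v $ i}"

definition hball :: "'a^'n \<Rightarrow> ('a^'n) set" where
  "hball u = {v. hdist u v \<le> 1}"

definition Eset :: "('a::field)^'n \<Rightarrow> ('a^'n) set" where
  "Eset u = (\<Union>c. hball (c *s u))"

definition short_covering :: "(('a::field)^'n) set \<Rightarrow> bool" where
  "short_covering H \<longleftrightarrow> (\<Union>h\<in>H. Eset h) = UNIV"

definition std_e :: "'n \<Rightarrow> ('a::field)^'n" where
  "std_e j = (\<chi> i. if i = j then 1 else 0)"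

definition perm_act :: "('n \<Rightarrow> 'n) \<Rightarrow> 'a^'n \<Rightarrow> 'a^'n" where
  "perm_act \<sigma> u = (\<chi> i. u $ (inv \<sigma> i))"

definition sym_subgroup :: "(3 \<Rightarrow> 3) set \<Rightarrow> bool" where
  "sym_subgroup N \<longleftrightarrow> (\<forall>\<sigma>\<in>N. \<sigma> permutes (UNIV::3 set)) \<and> id \<in> N \<and>
     (\<forall>\<sigma>\<in>N. \<forall>\<tau>\<in>N. \<sigma> \<circ> \<tau> \<in> N) \<and> (\<forall>\<sigma>\<in>N. inv \<sigma> \<in> N)"

definition A_q :: "('a^3) set" where
  "A_q = {u. u $ 1 \<noteq> u $ 2 \<and> u $ 1 \<noteq> u $ 3 \<and> u $ 2 \<noteq> u $ 3}"

definition orbit_NK :: "(3 \<Rightarrow> 3) set \<Rightarrow> ('a::field)^3 \<Rightarrow> ('a^3) set" where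
  "orbit_NK N u = {c *s perm_act \<sigma> u | \<sigma> c. \<sigma> \<in> N \<and> c \<noteq> 0}"

end

theory Submission
  imports Defs
begin

text \<open>The sets E(h) are invariant under permuting coordinates and under nonzero scaling,
  and E(h) contains every point c h + d e_j. Hence if some N x K-translate of u in A_q has
  the form c h + d e_j with h in L, then u lies in E(h') for the translate h' of h,
  which lies in L by N-invariance. Points outside A_q have two equal coordinates and
  therefore lie within distance 1 of a multiple of (1,1,1).\<close>

lemma perm_act_scale: "perm_act \<sigma> (c *s u) = c *s perm_act \<sigma> u"
  by (simp add: perm_act_def vec_eq_iff)

lemma perm_act_inv_perm_act:
  assumes "\<sigma> permutes UNIV"
  shows "perm_act (inv \<sigma>) (perm_act \<sigma> u) = u"
  using assms by (simp add: perm_act_def vec_eq_iff permutes_inv_inv permutes_inverses)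

lemma hdist_perm_act:
  fixes u v :: "'a^'n"
  assumes "\<sigma> permutes UNIV"
  shows "hdist (perm_act \<sigma> u) (perm_act \<sigma> v) = hdist u v"
proof -
  have "{i. perm_act \<sigma> u $ i \<noteq> perm_act \<sigma> v $ i} = \<sigma> ` {i. u $ i \<noteq> v $ i}"
    using assms by (force simp: perm_act_def permutes_inverses image_iff)
  moreover have "inj \<sigma>"
    using assms by (rule permutes_inj)
  ultimately show ?thesis
    by (simp add: hdist_def card_image inj_on_subset)
qed

lemma hdist_scale:
  fixes u v :: "('a::field)^'n"
  assumes "c \<noteq> 0"
  shows "hdist (c *s u) (c *s v) = hdist u v"
  using assms by (simp add: hdist_def)

lemma hdist_le_card:
  fixes u v :: "'a^'n::finite"
  assumes "{i. u $ i \<noteq> v $ i} \<subseteq> S"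
  shows "hdist u v \<le> card S"
  using assms unfolding hdist_def by (simp add: card_mono)

lemma mem_EsetI: "hdist (c *s h) x \<le> 1 \<Longrightarrow> x \<in> Eset h"
  unfolding Eset_def hball_def by blast

lemma scale_mem_Eset_iff:
  fixes x h :: "('a::field)^'n"
  assumes "c \<noteq> 0"
  shows "c *s x \<in> Eset h \<longleftrightarrow> x \<in> Eset h"
proof
  assume "c *s x \<in> Eset h"
  then obtain b where "hdist (b *s h) (c *s x) \<le> 1"
    unfolding Eset_def hball_def by blast
  then have "hdist ((inverse c * b) *s h) x \<le> 1"
    using hdist_scale[of "inverse c" "b *s h" "c *s x"] assms
    by (simp add: scalar_mult_eq_scaleR)
  then show "x \<in> Eset h" by (rule mem_EsetI)
next
  assume "x \<in> Eset h"
  then obtain b where "hdist (b *s h) x \<le> 1"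
    unfolding Eset_def hball_def by blast
  then have "hdist ((c * b) *s h) (c *s x) \<le> 1"
    using hdist_scale[OF assms, of "b *s h" x] by simp
  then show "c *s x \<in> Eset h" by (rule mem_EsetI)
qed

lemma perm_act_mem_Eset:
  fixes x h :: "('a::field)^'n"
  assumes "\<sigma> permutes UNIV" "x \<in> Eset h"
  shows "perm_act \<sigma> x \<in> Eset (perm_act \<sigma> h)"
proof -
  obtain c where "hdist (c *s h) x \<le> 1"
    using assms(2) unfolding Eset_def hball_def by blast
  then have "hdist (c *s perm_act \<sigma> h) (perm_act \<sigma> x) \<le> 1"
    using hdist_perm_act[OF assms(1), of "c *s h" x] by (simp add: perm_act_scale)
  then show ?thesis by (rule mem_EsetI)
qed

lemma scale_plus_std_e_mem_Eset:
  fixes h :: "('a::field)^'n::finite"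
  shows "c *s h + d *s std_e j \<in> Eset h"
proof (rule mem_EsetI)
  have "{i. (c *s h) $ i \<noteq> (c *s h + d *s std_e j) $ i} \<subseteq> {j}"
    by (auto simp: std_e_def)
  then have "hdist (c *s h) (c *s h + d *s std_e j) \<le> card {j}"
    by (rule hdist_le_card)
  then show "hdist (c *s h) (c *s h + d *s std_e j) \<le> 1"
    by simp
qed

lemma not_A_q_mem_Eset_ones:
  fixes x :: "('a::field)^3"
  assumes "x \<notin> A_q"
  shows "x \<in> Eset (\<chi> i. 1)"
proof -
  have "(1::3) \<noteq> 2" "(1::3) \<noteq> 3" "(2::3) \<noteq> 3"
    by simp_all
  then obtain a b :: 3 where ab: "a \<noteq> b" "x $ a = x $ b"
    using assms unfolding A_q_def by blast
  have "{i. (x $ a *s (\<chi> i. (1::'a))) $ i \<noteq> x $ i} \<subseteq> UNIV - {a, b}"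
    using ab by auto
  then have "hdist (x $ a *s (\<chi> i. (1::'a))) x \<le> card (UNIV - {a, b})"
    by (rule hdist_le_card)
  also have "\<dots> = 1"
    using ab by (simp add: card_Diff_subset)
  finally show ?thesis
    by (rule mem_EsetI)
qed

theorem theorem22:
  fixes N :: "(3 \<Rightarrow> 3) set" and L :: "('a::{finite,field}^3) set"
  assumes "sym_subgroup N"
    and "\<forall>\<sigma>\<in>N. perm_act \<sigma> ` L = L"
    and "\<forall>u\<in>A_q. \<exists>v\<in>orbit_NK N u. \<exists>h\<in>L. \<exists>c d. \<exists>j::3. v = c *s h + d *s std_e j"
  shows "short_covering (L \<union> {(\<chi> i. 1)})"
  unfolding short_covering_def
proof (intro set_eqI iffI)
  fix x :: "'a^3"
  show "x \<in> (\<Union>h\<in>L \<union> {(\<chi> i. 1)}. Eset h)"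
  proof (cases "x \<in> A_q")
    case False
    then show ?thesis using not_A_q_mem_Eset_ones by blast
  next
    case True
    then obtain \<sigma> c h c' d j where \<sigma>: "\<sigma> \<in> N" and "c \<noteq> 0" and "h \<in> L"
      and v: "c *s perm_act \<sigma> x = c' *s h + d *s std_e j"
      using assms(3) unfolding orbit_NK_def by blast
    have perm: "\<sigma> permutes UNIV" and "inv \<sigma> \<in> N"
      using \<sigma> assms(1) unfolding sym_subgroup_def by blast+
    then have "perm_act (inv \<sigma>) h \<in> L"
      using assms(2) \<open>h \<in> L\<close> by blast
    moreover have "c *s perm_act \<sigma> x \<in> Eset h"
      unfolding v by (rule scale_plus_std_e_mem_Eset)
    then have "perm_act \<sigma> x \<in> Eset h"
      using scale_mem_Eset_iff[OF \<open>c \<noteq> 0\<close>] by blast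
    then have "perm_act (inv \<sigma>) (perm_act \<sigma> x) \<in> Eset (perm_act (inv \<sigma>) h)"
      by (rule perm_act_mem_Eset[OF permutes_inv[OF perm]])
    then have "x \<in> Eset (perm_act (inv \<sigma>) h)"
      by (simp only: perm_act_inv_perm_act[OF perm])
    ultimately show ?thesis
      by blast
  qed
qed simp

end
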